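(* If $T$ is a tree of order $n\ge 2$, then $\gamma_{\rm gr}^t(T) = n$ if and only if $T$ has a perfect matching.
   Context: $N(v)$ denotes the open neighborhood of $v$. A sequence $S=(v_1,\ldots,v_k)$ of distinct vertices of a graph $G$ without isolated vertices is a legal sequence if $N(v_i)\setminus \bigcup_{j=1}^{i-1} N(v_j)\neq\emptyset$ for every $i\in\{2,\ldots,k\}$, and a total dominating sequence if moreover $\{v_1,\ldots,v_k\}$ is a total dominating set of $G$ (every vertex has a neighbor in it). $\gamma_{\rm gr}^t(G)$ is the maximum length of a total dominating sequence of $G$. *)

theory Defs
  imports Main
begin

definition simple_graph :: "'a set \<Rightarrow> ('a \<Rightarrow> 'a \<Rightarrow> bool) \<Rightarrow> bool" where
  "simple_graph V E \<longleftrightarrow> finite V \<and> (\<forall>u v. E u v \<longrightarrow> u \<in> V \<and> v \<in> V)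
     \<and> (\<forall>u v. E u v \<longrightarrow> E v u) \<and> (\<forall>v. \<not> E v v)"

definition nbhd :: "'a set \<Rightarrow> ('a \<Rightarrow> 'a \<Rightarrow> bool) \<Rightarrow> 'a \<Rightarrow> 'a set" where
  "nbhd V E v = {u \<in> V. E v u}"

definition connected_graph :: "'a set \<Rightarrow> ('a \<Rightarrow> 'a \<Rightarrow> bool) \<Rightarrow> bool" where
  "connected_graph V E \<longleftrightarrow> (\<forall>u\<in>V. \<forall>v\<in>V. (\<lambda>x y. E x y)\<^sup>*\<^sup>* u v)"

definition is_cycle :: "'a set \<Rightarrow> ('a \<Rightarrow> 'a \<Rightarrow> bool) \<Rightarrow> 'a list \<Rightarrow> bool" where
  "is_cycle V E cs \<longleftrightarrow> length cs \<ge> 3 \<and> distinct cs \<and> set cs \<subseteq> V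
     \<and> (\<forall>i. Suc i < length cs \<longrightarrow> E (cs ! i) (cs ! Suc i))
     \<and> E (last cs) (hd cs)"

definition acyclic_graph :: "'a set \<Rightarrow> ('a \<Rightarrow> 'a \<Rightarrow> bool) \<Rightarrow> bool" where
  "acyclic_graph V E \<longleftrightarrow> (\<nexists>cs. is_cycle V E cs)"

definition is_tree :: "'a set \<Rightarrow> ('a \<Rightarrow> 'a \<Rightarrow> bool) \<Rightarrow> bool" where
  "is_tree V E \<longleftrightarrow> simple_graph V E \<and> V \<noteq> {} \<and> connected_graph V E \<and> acyclic_graph V E"

definition perfect_matching :: "'a set \<Rightarrow> ('a \<Rightarrow> 'a \<Rightarrow> bool) \<Rightarrow> 'a set set \<Rightarrow> bool" where
  "perfect_matching V E M \<longleftrightarrow>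
     (\<forall>e\<in>M. \<exists>u v. e = {u, v} \<and> E u v)
     \<and> (\<forall>e1\<in>M. \<forall>e2\<in>M. e1 \<noteq> e2 \<longrightarrow> e1 \<inter> e2 = {})
     \<and> (\<forall>v\<in>V. \<exists>e\<in>M. v \<in> e)"

definition has_perfect_matching :: "'a set \<Rightarrow> ('a \<Rightarrow> 'a \<Rightarrow> bool) \<Rightarrow> bool" where
  "has_perfect_matching V E \<longleftrightarrow> (\<exists>M. perfect_matching V E M)"

definition legal_seq :: "'a set \<Rightarrow> ('a \<Rightarrow> 'a \<Rightarrow> bool) \<Rightarrow> 'a list \<Rightarrow> bool" where
  "legal_seq V E S \<longleftrightarrow> distinct S \<and> set S \<subseteq> V
     \<and> (\<forall>i. 1 \<le> i \<and> i < length S \<longrightarrow>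
           nbhd V E (S ! i) - (\<Union>j<i. nbhd V E (S ! j)) \<noteq> {})"

definition total_dominating_set :: "'a set \<Rightarrow> ('a \<Rightarrow> 'a \<Rightarrow> bool) \<Rightarrow> 'a set \<Rightarrow> bool" where
  "total_dominating_set V E D \<longleftrightarrow> D \<subseteq> V \<and> (\<forall>v\<in>V. \<exists>u\<in>D. E v u)"

definition total_dominating_seq :: "'a set \<Rightarrow> ('a \<Rightarrow> 'a \<Rightarrow> bool) \<Rightarrow> 'a list \<Rightarrow> bool" where
  "total_dominating_seq V E S \<longleftrightarrow> legal_seq V E S \<and> total_dominating_set V E (set S)"

definition gamma_gr_t :: "'a set \<Rightarrow> ('a \<Rightarrow> 'a \<Rightarrow> bool) \<Rightarrow> nat" where
  "gamma_gr_t V E = Max {length S | S. total_dominating_seq V E S}"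

end

theory Submission
  imports Defs
begin

(* A legal sequence footprints a new vertex with every entry, so a total dominating sequence of
   length n lists all vertices, and choosing footprints yields an injective map f with v adjacent
   to f v for every vertex v.  An orbit of f of length at least 3 would be a cycle and f has no
   fixed points, so in a tree f is an involution and the edges {v, f v} form a perfect matching.
   Conversely, given a perfect matching, take a leaf l and its partner w: by induction the forest
   without l and w has a legal ordering R, and l, R, w is legal, since l footprints w, each vertex
   of R footprints its partner, and w finally footprints l, which no vertex of R dominates. *)

(* legal_from V E D S: S is legal when the vertices of D count as already dominated. *)
fun legal_from :: "'a set \<Rightarrow> ('a \<Rightarrow> 'a \<Rightarrow> bool) \<Rightarrow> 'a set \<Rightarrow> 'a list \<Rightarrow> bool" where
  "legal_from V E D [] \<longleftrightarrow> True"
| "legal_from V E D (x # xs) \<longleftrightarrow> nbhd V E x - D \<noteq> {} \<and> legal_from V E (D \<union> nbhd V E x) xs"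

lemma legal_from_conv_nth:
  "legal_from V E D S \<longleftrightarrow>
     (\<forall>i<length S. nbhd V E (S ! i) - (D \<union> (\<Union>j<i. nbhd V E (S ! j))) \<noteq> {})"
proof (induction S arbitrary: D)
  case (Cons x xs)
  have "(\<Union>j<Suc i. nbhd V E ((x # xs) ! j)) = nbhd V E x \<union> (\<Union>j<i. nbhd V E (xs ! j))" for i
    by (auto simp: lessThan_Suc_eq_insert_0)
  then show ?case
    by (simp add: Cons.IH All_less_Suc2 Un_assoc)
qed simp

lemma legal_seq_Cons_iff:
  "legal_seq V E (x # xs) \<longleftrightarrow>
     distinct (x # xs) \<and> set (x # xs) \<subseteq> V \<and> legal_from V E (nbhd V E x) xs"
proof -
  have "(\<forall>i. 1 \<le> i \<and> i < length (x # xs) \<longrightarrow> P i) \<longleftrightarrow> (\<forall>k<length xs. P (Suc k))" for P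
    by (metis One_nat_def Suc_le_eq length_Cons not0_implies_Suc not_less_eq zero_less_Suc)
  moreover have "(\<Union>j<Suc k. nbhd V E ((x # xs) ! j)) = nbhd V E x \<union> (\<Union>j<k. nbhd V E (xs ! j))" for k
    by (auto simp: lessThan_Suc_eq_insert_0)
  ultimately show ?thesis
    unfolding legal_seq_def legal_from_conv_nth by simp
qed

lemma legal_from_append:
  "legal_from V E D (xs @ ys) \<longleftrightarrow>
     legal_from V E D xs \<and> legal_from V E (D \<union> \<Union>(nbhd V E ` set xs)) ys"
  by (induction xs arbitrary: D) (auto simp: Un_assoc)

lemma legal_from_mono:
  assumes "legal_from V E D S" and "V \<subseteq> V'" and "D' \<inter> V \<subseteq> D"
  shows "legal_from V' E D' S"
  using assms
proof (induction S arbitrary: D D')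
  case (Cons x xs)
  have "nbhd V E x - D \<subseteq> nbhd V' E x - D'" and "(D' \<union> nbhd V' E x) \<inter> V \<subseteq> D \<union> nbhd V E x"
    using Cons.prems(2,3) by (auto simp: nbhd_def)
  then show ?case using Cons by auto
qed simp

lemma legal_from_private_neighbours:
  "legal_from V E D S \<Longrightarrow> \<exists>f. inj_on f (set S) \<and> (\<forall>v\<in>set S. f v \<in> nbhd V E v - D)"
proof (induction S arbitrary: D)
  case (Cons x xs)
  obtain u where u: "u \<in> nbhd V E x - D" using Cons.prems by (simp only: legal_from.simps) blast
  obtain g where g: "inj_on g (set xs)" "\<forall>v\<in>set xs. g v \<in> nbhd V E v - (D \<union> nbhd V E x)"
    using Cons.IH[of "D \<union> nbhd V E x"] Cons.prems by auto
  then have "x \<notin> set xs" by blast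
  then have "inj_on (g(x := u)) (set (x # xs)) \<and> (\<forall>v\<in>set (x # xs). (g(x := u)) v \<in> nbhd V E v - D)"
    using g u by (auto simp: inj_on_def)
  then show ?case by blast
qed simp

lemma legal_from_distinct: "legal_from V E D S \<Longrightarrow> distinct S"
proof (induction S arbitrary: D)
  case (Cons x xs)
  then obtain f where "\<forall>v\<in>set xs. f v \<in> nbhd V E v - (D \<union> nbhd V E x)"
    using legal_from_private_neighbours by fastforce
  then show ?case using Cons by auto
qed simp

lemma legal_seq_iff_legal_from:
  assumes "\<forall>v\<in>set S. nbhd V E v \<noteq> {}"
  shows "legal_seq V E S \<longleftrightarrow> set S \<subseteq> V \<and> legal_from V E {} S"
proof (cases S)
  case Nil
  then show ?thesis by (simp add: legal_seq_def)
next
  case (Cons x xs)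
  then show ?thesis
    using assms legal_from_distinct[of V E "{}" S] by (auto simp: legal_seq_Cons_iff)
qed

lemma total_dominating_seq_exists:
  assumes "symp E" and "finite V" and no_isolated: "\<forall>v\<in>V. nbhd V E v \<noteq> {}"
  shows "\<exists>S. total_dominating_seq V E S"
proof -
  have "\<exists>S'. total_dominating_seq V E S'" if "set S \<subseteq> V" and "legal_from V E {} S" for S
    using that
  proof (induction "card V - length S" arbitrary: S rule: less_induct)
    case less
    show ?case
    proof (cases "total_dominating_set V E (set S)")
      case True
      moreover have "legal_seq V E S"
        using less.prems no_isolated legal_seq_iff_legal_from[of S V E] by blast
      ultimately show ?thesis by (auto simp: total_dominating_seq_def)
    next
      case False
      then obtain w where w: "w \<in> V" "\<forall>y\<in>set S. \<not> E w y"
        using less.prems(1) by (auto simp: total_dominating_set_def)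
      then obtain u where u: "u \<in> V" "E w u" using no_isolated by (auto simp: nbhd_def)
      have "w \<in> nbhd V E u - \<Union>(nbhd V E ` set S)"
        using w u \<open>symp E\<close> by (auto simp: nbhd_def dest: sympD)
      then have "legal_from V E {} (S @ [u])" using less.prems(2) by (auto simp: legal_from_append)
      moreover have "length S < card V"
      proof -
        have "set S \<subset> V" using less.prems(1) u w by auto
        then show ?thesis
          using \<open>finite V\<close> legal_from_distinct[OF less.prems(2)]
          by (metis distinct_card psubset_card_mono)
      qed
      ultimately show ?thesis using less.hyps[of "S @ [u]"] less.prems(1) u(1) by simp
    qed
  qed
  from this[of "[]"] show ?thesis by simp
qed

lemma gamma_gr_t_eq_card_iff:
  assumes "simple_graph V E" and no_isolated: "\<forall>v\<in>V. nbhd V E v \<noteq> {}"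
  shows "gamma_gr_t V E = card V \<longleftrightarrow> (\<exists>S. set S = V \<and> legal_from V E {} S)"
proof -
  let ?L = "{length S | S. total_dominating_seq V E S}"
  have "finite V" and "symp E" using assms(1) by (auto simp: simple_graph_def symp_def)
  have spanning: "total_dominating_seq V E S \<and> length S = card V \<longleftrightarrow> set S = V \<and> legal_from V E {} S"
    for S
  proof
    assume S: "total_dominating_seq V E S \<and> length S = card V"
    then have "distinct S" "set S \<subseteq> V"
      by (auto simp: total_dominating_seq_def legal_seq_def)
    with S have "set S = V" using \<open>finite V\<close> by (metis card_subset_eq distinct_card)
    then show "set S = V \<and> legal_from V E {} S"
      using S no_isolated legal_seq_iff_legal_from[of S V E] by (auto simp: total_dominating_seq_def)
  next
    assume S: "set S = V \<and> legal_from V E {} S"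
    then have "length S = card V" using legal_from_distinct by (metis distinct_card)
    moreover have "total_dominating_set V E (set S)"
      using S no_isolated by (auto simp: total_dominating_set_def nbhd_def)
    ultimately show "total_dominating_seq V E S \<and> length S = card V"
      using S no_isolated legal_seq_iff_legal_from[of S V E] by (simp add: total_dominating_seq_def)
  qed
  have bounded: "\<forall>l\<in>?L. l \<le> card V"
  proof
    fix l assume "l \<in> ?L"
    then obtain S where "legal_seq V E S" "l = length S" by (auto simp: total_dominating_seq_def)
    then show "l \<le> card V"
      using \<open>finite V\<close> by (metis card_mono distinct_card legal_seq_def)
  qed
  then have "finite ?L" by (meson finite_atMost finite_subset subsetI atMost_iff)
  moreover have "?L \<noteq> {}"
    using total_dominating_seq_exists[OF \<open>symp E\<close> \<open>finite V\<close> no_isolated] by auto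
  ultimately have "Max ?L = card V \<longleftrightarrow> card V \<in> ?L"
    using bounded Max_in[of ?L] Max_eqI[of ?L "card V"] by auto
  then have "gamma_gr_t V E = card V \<longleftrightarrow> (\<exists>S. total_dominating_seq V E S \<and> length S = card V)"
    unfolding gamma_gr_t_def by auto
  then show ?thesis using spanning by blast
qed

definition graph_path :: "('a \<Rightarrow> 'a \<Rightarrow> bool) \<Rightarrow> 'a list \<Rightarrow> bool" where
  "graph_path E P \<longleftrightarrow> distinct P \<and> (\<forall>i. Suc i < length P \<longrightarrow> E (P ! i) (P ! Suc i))"

lemma graph_path_chord_cycle:
  assumes "symp E" and "graph_path E P" and "set P \<subseteq> V"
    and "2 \<le> c" and "c < length P" and "E (P ! 0) (P ! c)"
  shows "is_cycle V E (take (Suc c) P)"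
proof -
  have "last (take (Suc c) P) = P ! c"
    using assms(5) by (subst last_conv_nth) (auto simp: min_def intro: arg_cong[where f = "nth P"])
  moreover have "hd (take (Suc c) P) = P ! 0"
    using assms(5) by (cases P) auto
  moreover have "set (take (Suc c) P) \<subseteq> V"
    using assms(3) set_take_subset[of "Suc c" P] by blast
  ultimately show ?thesis
    using assms by (auto simp: is_cycle_def graph_path_def dest: sympD)
qed

(* The first vertex of a longest path in W has no neighbour in W off the path, and a second
   neighbour on the path would close a cycle. *)
lemma acyclic_graph_has_leaf:
  assumes "symp E" and "irreflp E" and "acyclic_graph V E"
    and "finite W" and "W \<subseteq> V" and "W \<noteq> {}"
  shows "\<exists>l\<in>W. \<forall>y\<in>W. \<forall>z\<in>W. E l y \<longrightarrow> E l z \<longrightarrow> y = z"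
proof -
  obtain x where x: "x \<in> W" using assms(6) by blast
  have single: "graph_path E [x] \<and> set [x] \<subseteq> W" using x by (simp add: graph_path_def)
  have "length P < Suc (card W)" if "graph_path E P \<and> set P \<subseteq> W" for P
    using that assms(4) by (metis card_mono distinct_card graph_path_def le_imp_less_Suc)
  with single obtain P where P: "graph_path E P" "set P \<subseteq> W"
    and longest: "\<And>Q. graph_path E Q \<and> set Q \<subseteq> W \<Longrightarrow> length Q \<le> length P"
    using ex_has_greatest_nat[of "\<lambda>P. graph_path E P \<and> set P \<subseteq> W" "[x]" length] by metis
  have "P \<noteq> []" using longest[OF single] by auto
  have on_path: "\<exists>i<length P. y = P ! i" if "y \<in> W" "E (P ! 0) y" for y
  proof (rule ccontr)
    assume "\<not> ?thesis"
    then have "y \<notin> set P" by (auto simp: in_set_conv_nth)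
    moreover have "E y (P ! 0)" using that(2) \<open>symp E\<close> by (blast dest: sympD)
    ultimately have "graph_path E (y # P) \<and> set (y # P) \<subseteq> W"
      using P that(1) by (auto simp: graph_path_def nth_Cons split: nat.split)
    then show False using longest by fastforce
  qed
  have "y = z" if "y \<in> W" "z \<in> W" "E (P ! 0) y" "E (P ! 0) z" for y z
  proof -
    have no_chord: "i < 2" if "i < length P" "E (P ! 0) (P ! i)" for i
    proof (rule ccontr)
      assume "\<not> i < 2"
      then have "is_cycle V E (take (Suc i) P)"
        using graph_path_chord_cycle[OF \<open>symp E\<close> P(1) _ _ that] P(2) assms(5) by auto
      then show False using assms(3) by (auto simp: acyclic_graph_def)
    qed
    have "P ! 0 \<noteq> y" "P ! 0 \<noteq> z" using that \<open>irreflp E\<close> by (auto dest: irreflpD)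
    then show ?thesis
      using on_path[OF that(1,3)] on_path[OF that(2,4)] no_chord that(3,4) by (metis less_2_cases)
  qed
  moreover have "P ! 0 \<in> W" using P(2) \<open>P \<noteq> []\<close> by auto
  ultimately show ?thesis by blast
qed

lemma acyclic_matched_legal_ordering:
  assumes "symp E" and "irreflp E" and "acyclic_graph V E"
    and "finite W" and "W \<subseteq> V" and "\<forall>x\<in>W. m x \<in> W \<and> E x (m x) \<and> m (m x) = x"
  shows "\<exists>S. set S = W \<and> legal_from W E {} S"
  using assms(4-6)
proof (induction "card W" arbitrary: W rule: less_induct)
  case less
  show ?case
  proof (cases "W = {}")
    case True
    then show ?thesis by simp
  next
    case False
    obtain l where l: "l \<in> W" and leaf: "\<forall>y\<in>W. \<forall>z\<in>W. E l y \<longrightarrow> E l z \<longrightarrow> y = z"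
      using acyclic_graph_has_leaf[OF assms(1-3) less.prems(1,2) False] by blast
    define w where "w = m l"
    have w: "w \<in> W" "E l w" "m w = l" "w \<noteq> l"
      using less.prems(3) l \<open>irreflp E\<close> by (auto simp: w_def irreflp_def)
    define W' where "W' = W - {l, w}"
    have "card W' < card W"
      unfolding W'_def using less.prems(1) l by (intro psubset_card_mono) auto
    moreover have "\<forall>x\<in>W'. m x \<in> W' \<and> E x (m x) \<and> m (m x) = x"
      using less.prems(3) w by (auto simp: W'_def w_def)
    ultimately obtain S' where S': "set S' = W'" "legal_from W' E {} S'"
      using less.hyps less.prems(1,2) unfolding W'_def by (meson Diff_subset finite_Diff subset_trans)
    have "nbhd W E l = {w}" using leaf w(1,2) by (auto simp: nbhd_def)
    moreover have "legal_from W E {w} S'"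
      using S' by (intro legal_from_mono[OF S'(2)]) (auto simp: W'_def)
    moreover have "l \<in> nbhd W E w - ({w} \<union> \<Union>(nbhd W E ` set S'))"
      using leaf l w \<open>symp E\<close> S'(1) by (auto simp: nbhd_def W'_def dest: sympD)
    ultimately have "legal_from W E {} (l # S' @ [w])"
      by (auto simp: legal_from_append)
    moreover have "set (l # S' @ [w]) = W" using S'(1) l w(1) by (auto simp: W'_def)
    ultimately show ?thesis by blast
  qed
qed

lemma funpow_in: "f ` V \<subseteq> V \<Longrightarrow> v \<in> V \<Longrightarrow> (f ^^ i) v \<in> V"
  by (induction i) auto

lemma funpow_return_cancel:
  assumes "inj_on f V" and "f ` V \<subseteq> V" and "v \<in> V" and "(f ^^ (i + d)) v = (f ^^ i) v"
  shows "(f ^^ d) v = v"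
  using assms(4)
proof (induction i)
  case (Suc i)
  have "f ((f ^^ (i + d)) v) = f ((f ^^ i) v)" using Suc.prems by simp
  then have "(f ^^ (i + d)) v = (f ^^ i) v"
    using inj_onD[OF assms(1)] funpow_in[OF assms(2,3)] by blast
  then show ?case by (rule Suc.IH)
qed simp

lemma funpow_returns:
  assumes "finite V" and "inj_on f V" and "f ` V \<subseteq> V" and "v \<in> V"
  shows "\<exists>d>0. (f ^^ d) v = v"
proof -
  have "(\<lambda>i. (f ^^ i) v) ` {..card V} \<subseteq> V" using funpow_in[OF assms(3,4)] by auto
  then have "\<not> inj_on (\<lambda>i. (f ^^ i) v) {..card V}"
    using card_inj_on_le[OF _ _ assms(1)] by fastforce
  then obtain i j where "i < j" "(f ^^ i) v = (f ^^ j) v"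
    unfolding inj_on_def by (metis linorder_neqE_nat)
  then have "(f ^^ (j - i)) v = v"
    using funpow_return_cancel[OF assms(2-4), of i "j - i"] by simp
  with \<open>i < j\<close> show ?thesis using zero_less_diff by blast
qed

lemma acyclic_neighbour_injection_involutive:
  assumes "irreflp E" and "acyclic_graph V E" and "finite V"
    and "inj_on f V" and "f ` V \<subseteq> V" and adj: "\<forall>v\<in>V. E v (f v)" and "v \<in> V"
  shows "f (f v) = v"
proof -
  define k where "k = (LEAST d. 0 < d \<and> (f ^^ d) v = v)"
  have k: "0 < k" "(f ^^ k) v = v"
    using LeastI_ex[OF funpow_returns[OF assms(3-5,7)]] by (simp_all add: k_def)
  have minimal: "(f ^^ d) v \<noteq> v" if "0 < d" "d < k" for d
    using not_less_Least that by (fastforce simp: k_def)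
  have no_repeat: False if "a < b" "b < k" "(f ^^ a) v = (f ^^ b) v" for a b
  proof -
    have "(f ^^ (a + (b - a))) v = (f ^^ a) v" using that by simp
    then have "(f ^^ (b - a)) v = v" by (rule funpow_return_cancel[OF assms(4,5,7)])
    then show False using minimal[of "b - a"] that by simp
  qed
  define cs where "cs = map (\<lambda>i. (f ^^ i) v) [0..<k]"
  have "distinct cs"
    unfolding cs_def distinct_map
  proof (intro conjI inj_onI)
    fix i j assume "i \<in> set [0..<k]" "j \<in> set [0..<k]" "(f ^^ i) v = (f ^^ j) v"
    then show "i = j"
      using no_repeat[of i j] no_repeat[of j i] by (cases i j rule: linorder_cases) auto
  qed simp
  moreover have "set cs \<subseteq> V" using funpow_in[OF assms(5,7)] by (auto simp: cs_def)
  moreover have "E (cs ! i) (cs ! Suc i)" if "Suc i < length cs" for i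
    using that adj funpow_in[OF assms(5,7)] by (simp add: cs_def del: upt_Suc)
  moreover have "E (last cs) (hd cs)"
  proof -
    have "f ((f ^^ (k - 1)) v) = (f ^^ Suc (k - 1)) v" by simp
    also have "\<dots> = v" using k by simp
    finally have "f ((f ^^ (k - 1)) v) = v" .
    then have "E ((f ^^ (k - 1)) v) v" using adj funpow_in[OF assms(5,7)] by metis
    then show ?thesis using k(1) by (simp add: cs_def last_map hd_map)
  qed
  moreover have "length cs = k" by (simp add: cs_def)
  ultimately have "\<not> 3 \<le> k"
    using assms(2) unfolding acyclic_graph_def is_cycle_def by blast
  moreover have "k \<noteq> 1" using k adj \<open>irreflp E\<close> assms(7) by (auto simp: irreflp_def)
  ultimately have "k = 2" using k(1) by linarith
  then show ?thesis using k(2) by (simp add: numeral_2_eq_2)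
qed

lemma perfect_matching_of_involution:
  assumes "\<forall>v\<in>V. E v (f v) \<and> f (f v) = v"
  shows "perfect_matching V E ((\<lambda>v. {v, f v}) ` V)"
proof -
  have "{a, f a} = {c, f c}" if "a \<in> V" "c \<in> {a, f a}" for a c
    using that assms by auto
  then have disjoint: "{a, f a} \<inter> {b, f b} = {}" if "{a, f a} \<noteq> {b, f b}" "a \<in> V" "b \<in> V"
    for a b
    using that by blast
  show ?thesis
    unfolding perfect_matching_def
  proof (intro conjI ballI impI)
    fix e1 e2 assume "e1 \<in> (\<lambda>v. {v, f v}) ` V" "e2 \<in> (\<lambda>v. {v, f v}) ` V" "e1 \<noteq> e2"
    then show "e1 \<inter> e2 = {}" using disjoint by blast
  qed (use assms in auto)
qed

lemma perfect_matching_imp_involution: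
  assumes "simple_graph V E" and "perfect_matching V E M"
  shows "\<exists>m. \<forall>v\<in>V. m v \<in> V \<and> E v (m v) \<and> m (m v) = v"
proof -
  have sym: "E a b \<Longrightarrow> E b a" and irr: "\<not> E a a" and edge: "E a b \<Longrightarrow> b \<in> V" for a b
    using assms(1) by (auto simp: simple_graph_def)
  have edges: "\<forall>e\<in>M. \<exists>a b. e = {a, b} \<and> E a b"
    and disjoint: "\<forall>e1\<in>M. \<forall>e2\<in>M. e1 \<noteq> e2 \<longrightarrow> e1 \<inter> e2 = {}"
    and covering: "\<forall>v\<in>V. \<exists>e\<in>M. v \<in> e"
    using assms(2) unfolding perfect_matching_def by simp_all
  have partner: "\<exists>u. {v, u} \<in> M \<and> E v u" if "v \<in> V" for v
  proof -
    have "\<exists>e\<in>M. v \<in> e" using covering that by (rule bspec)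
    then obtain e where "e \<in> M" "v \<in> e" by (rule bexE)
    have "\<exists>a b. e = {a, b} \<and> E a b" using edges \<open>e \<in> M\<close> by (rule bspec)
    then obtain a b where "e = {a, b}" "E a b" by (elim exE conjE)
    then show ?thesis
      using \<open>e \<in> M\<close> \<open>v \<in> e\<close> sym by (metis insert_commute insertE singletonD)
  qed
  define m where "m v = (SOME u. {v, u} \<in> M \<and> E v u)" for v
  have m: "{v, m v} \<in> M" "E v (m v)" if "v \<in> V" for v
    using someI_ex[OF partner[OF that]] by (simp_all add: m_def)
  have "m v \<in> V \<and> E v (m v) \<and> m (m v) = v" if "v \<in> V" for v
  proof -
    have "m v \<in> V" and "m v \<noteq> v" using m[OF that] edge irr by auto
    moreover have "{v, m v} = {m v, m (m v)}"
      using disjoint[rule_format, OF m(1)[OF that] m(1)[OF \<open>m v \<in> V\<close>]] by blast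
    ultimately show ?thesis using m(2)[OF that] by (metis doubleton_eq_iff)
  qed
  then show ?thesis by blast
qed

lemma spanning_legal_iff_perfect_matching:
  assumes "simple_graph V E" and "acyclic_graph V E"
  shows "(\<exists>S. set S = V \<and> legal_from V E {} S) \<longleftrightarrow> has_perfect_matching V E"
proof -
  have "finite V" "symp E" "irreflp E"
    using assms(1) by (auto simp: simple_graph_def symp_def irreflp_def)
  show ?thesis
  proof
    assume "\<exists>S. set S = V \<and> legal_from V E {} S"
    then obtain f where "inj_on f V" and f: "\<forall>v\<in>V. f v \<in> nbhd V E v"
      using legal_from_private_neighbours by fastforce
    moreover have "f ` V \<subseteq> V" and "\<forall>v\<in>V. E v (f v)" using f by (auto simp: nbhd_def)
    ultimately have "\<forall>v\<in>V. E v (f v) \<and> f (f v) = v"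
      using acyclic_neighbour_injection_involutive[OF \<open>irreflp E\<close> assms(2) \<open>finite V\<close>] by blast
    then show "has_perfect_matching V E"
      unfolding has_perfect_matching_def by (blast intro: perfect_matching_of_involution)
  next
    assume "has_perfect_matching V E"
    then obtain m where "\<forall>v\<in>V. m v \<in> V \<and> E v (m v) \<and> m (m v) = v"
      using perfect_matching_imp_involution[OF assms(1)] unfolding has_perfect_matching_def by blast
    then show "\<exists>S. set S = V \<and> legal_from V E {} S"
      using acyclic_matched_legal_ordering[OF \<open>symp E\<close> \<open>irreflp E\<close> assms(2) \<open>finite V\<close>] by blast
  qed
qed

lemma tree_nbhd_nonempty:
  assumes "is_tree V E" and "2 \<le> card V" and "v \<in> V"
  shows "nbhd V E v \<noteq> {}"
proof -
  have "\<not> V \<subseteq> {v}" using card_mono[of "{v}" V] assms(2) by auto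
  then obtain u where "u \<in> V" "u \<noteq> v" by blast
  then have "E\<^sup>*\<^sup>* v u" and "v \<noteq> u"
    using assms(1,3) by (auto simp: is_tree_def connected_graph_def)
  then obtain w where "E v w" by (metis converse_rtranclpE)
  then have "w \<in> nbhd V E v" using assms(1) by (simp add: is_tree_def simple_graph_def nbhd_def)
  then show ?thesis by blast
qed

theorem mainTheorem8:
  fixes V :: "'a set" and E :: "'a \<Rightarrow> 'a \<Rightarrow> bool" and n :: nat
  assumes "is_tree V E" and "card V = n" and "n \<ge> 2"
  shows "gamma_gr_t V E = n \<longleftrightarrow> has_perfect_matching V E"
proof -
  have graph: "simple_graph V E" and "acyclic_graph V E" using assms(1) by (simp_all add: is_tree_def)
  have "\<forall>v\<in>V. nbhd V E v \<noteq> {}" using tree_nbhd_nonempty[OF assms(1)] assms(2,3) by simp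
  then show ?thesis
    using gamma_gr_t_eq_card_iff[OF graph] spanning_legal_iff_perfect_matching[OF graph]
      \<open>acyclic_graph V E\<close> assms(2) by simp
qed

end
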